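(* There exists a $4\times 4$ Jacobi matrix $J$ that realizes perfect state transfer and has Early State Exclusion; i.e., if $T_0>0$ is the earliest time at which $J$ realizes perfect state transfer, then there is $t\in(0,T_0)$ with $(e^{-iJt}\mathbf{e}_0,\mathbf{e}_0)_{\mathbb{C}^{4}}=0$.
   Context: A Jacobi matrix of order $N+1$ is a real symmetric tridiagonal $(N+1)\times(N+1)$ matrix $J$ with diagonal entries $a_0,\dots,a_N\in\mathbb{R}$ and off-diagonal entries $b_0,\dots,b_{N-1}>0$. Let $\mathbf{e}_0,\dots,\mathbf{e}_N$ be the standard basis of $\mathbb{C}^{N+1}$. $J$ realizes perfect state transfer (PST) at time $T>0$ if $e^{-iTJ}\mathbf{e}_0=e^{i\phi}\mathbf{e}_N$ for some $\phi\in\mathbb{R}$. If $T_0$ is the earliest (smallest positive) such time, $J$ is said to have Early State Exclusion (ESE) at time $t$ if $0<t<T_0$ and $(e^{-iJt}\mathbf{e}_0,\mathbf{e}_0)_{\mathbb{C}^{N+1}}=0$. *)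

theory Defs
  imports "Jordan_Normal_Form.Matrix" Complex_Main
begin

definition jacobi_mat :: "nat \<Rightarrow> (nat \<Rightarrow> real) \<Rightarrow> (nat \<Rightarrow> real) \<Rightarrow> complex mat" where
  "jacobi_mat N a b = mat (Suc N) (Suc N) (\<lambda>(i, j).
      if i = j then complex_of_real (a i)
      else if j = i + 1 then complex_of_real (b i)
      else if i = j + 1 then complex_of_real (b j)
      else 0)"

definition mat_exp :: "complex mat \<Rightarrow> complex mat" where
  "mat_exp A = mat (dim_row A) (dim_col A)
      (\<lambda>(i, j). \<Sum>k. (A ^\<^sub>m k) $$ (i, j) / of_nat (fact k))"

definition pst :: "nat \<Rightarrow> complex mat \<Rightarrow> real \<Rightarrow> bool" where
  "pst N J T \<longleftrightarrow> T > 0 \<and>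
     (\<exists>\<phi>::real. mat_exp ((- \<i> * complex_of_real T) \<cdot>\<^sub>m J) *\<^sub>v unit_vec (Suc N) 0
                = exp (\<i> * complex_of_real \<phi>) \<cdot>\<^sub>v unit_vec (Suc N) N)"

definition earliest_pst :: "nat \<Rightarrow> complex mat \<Rightarrow> real \<Rightarrow> bool" where
  "earliest_pst N J T0 \<longleftrightarrow> pst N J T0 \<and> (\<forall>T. 0 < T \<and> T < T0 \<longrightarrow> \<not> pst N J T)"

definition ese :: "nat \<Rightarrow> complex mat \<Rightarrow> real \<Rightarrow> bool" where
  "ese N J t \<longleftrightarrow> (\<exists>T0. earliest_pst N J T0 \<and> 0 < t \<and> t < T0 \<and>
     (mat_exp ((- \<i> * complex_of_real t) \<cdot>\<^sub>m J) *\<^sub>v unit_vec (Suc N) 0) \<bullet>c unit_vec (Suc N) 0 = 0)"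

end

theory Submission
  imports Defs
begin

text \<open>The Jacobi matrix with zero diagonal and off-diagonal entries \<open>\<surd>15/2, 1, \<surd>15/2\<close> has
  eigenvalues \<open>\<plusminus>5/2, \<plusminus>3/2\<close>, so \<open>exp(-itJ) e\<^sub>0\<close> is an explicit trigonometric polynomial in \<open>t\<close>:
  the return amplitude is \<open>3/8 cos(5t/2) + 5/8 cos(3t/2)\<close> and the amplitude at \<open>e\<^sub>3\<close> is
  \<open>-i (3/8 sin(5t/2) - 5/8 sin(3t/2))\<close>. The latter has modulus one at \<open>t = \<pi>\<close>, giving perfect
  state transfer. Modulus one forces both sines to be \<open>\<plusminus>1\<close>, i.e. \<open>5t\<close> and \<open>3t\<close> are odd multiples
  of \<open>\<pi>\<close>, which is impossible for \<open>0 < t < \<pi>\<close>; so \<open>\<pi>\<close> is the earliest transfer time. The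
  return amplitude vanishes at \<open>t = 2 arccos \<surd>(5/6) < \<pi>\<close>, because
  \<open>3 cos 5x + 5 cos 3x = 8 cos\<^sup>3x (6 cos\<^sup>2x - 5)\<close>.\<close>

lemma pow_mat_eigen_expansion:
  fixes A :: "'a::comm_semiring_1 mat"
  assumes A: "A \<in> carrier_mat n n" and M: "finite M"
    and eigen: "\<And>m j. m \<in> M \<Longrightarrow> j < n \<Longrightarrow> (\<Sum>l<n. v m l * A $$ (l, j)) = \<mu> m * v m j"
    and complete: "\<And>i j. i < n \<Longrightarrow> j < n \<Longrightarrow> (\<Sum>m\<in>M. u m i * v m j) = (if i = j then 1 else 0)"
    and ij: "i < n" "j < n"
  shows "(A ^\<^sub>m k) $$ (i, j) = (\<Sum>m\<in>M. u m i * v m j * \<mu> m ^ k)"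
  using ij
proof (induction k arbitrary: j)
  case 0
  then show ?case using A complete[of i j] by simp
next
  case (Suc k)
  have "(A ^\<^sub>m Suc k) $$ (i, j) = (\<Sum>l<n. (A ^\<^sub>m k) $$ (i, l) * A $$ (l, j))"
    using A Suc.prems by (simp add: scalar_prod_def lessThan_atLeast0)
  also have "\<dots> = (\<Sum>l<n. \<Sum>m\<in>M. u m i * \<mu> m ^ k * (v m l * A $$ (l, j)))"
    using Suc by (intro sum.cong refl) (simp add: sum_distrib_left ac_simps)
  also have "\<dots> = (\<Sum>m\<in>M. u m i * \<mu> m ^ k * (\<Sum>l<n. v m l * A $$ (l, j)))"
    by (subst sum.swap) (simp add: sum_distrib_left)
  also have "\<dots> = (\<Sum>m\<in>M. u m i * v m j * \<mu> m ^ Suc k)"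
    using Suc.prems by (intro sum.cong refl) (simp add: eigen ac_simps)
  finally show ?case .
qed

lemma mat_exp_eigen_expansion:
  fixes A :: "complex mat"
  assumes A: "A \<in> carrier_mat n n" and M: "finite M"
    and eigen: "\<And>m j. m \<in> M \<Longrightarrow> j < n \<Longrightarrow> (\<Sum>l<n. v m l * A $$ (l, j)) = \<mu> m * v m j"
    and complete: "\<And>i j. i < n \<Longrightarrow> j < n \<Longrightarrow> (\<Sum>m\<in>M. u m i * v m j) = (if i = j then 1 else 0)"
    and ij: "i < n" "j < n"
  shows "mat_exp (s \<cdot>\<^sub>m A) $$ (i, j) = (\<Sum>m\<in>M. u m i * v m j * exp (s * \<mu> m))"
proof -
  have "((s \<cdot>\<^sub>m A) ^\<^sub>m k) $$ (i, j) = (\<Sum>m\<in>M. u m i * v m j * (s * \<mu> m) ^ k)" for k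
  proof (rule pow_mat_eigen_expansion[OF _ M _ complete ij])
    show "s \<cdot>\<^sub>m A \<in> carrier_mat n n" using A by simp
    show "(\<Sum>l<n. v m l * (s \<cdot>\<^sub>m A) $$ (l, j)) = s * \<mu> m * v m j" if "m \<in> M" "j < n" for m j
    proof -
      have "(\<Sum>l<n. v m l * (s \<cdot>\<^sub>m A) $$ (l, j)) = s * (\<Sum>l<n. v m l * A $$ (l, j))"
        using A that(2) by (simp add: sum_distrib_left ac_simps)
      then show ?thesis using eigen[OF that] by simp
    qed
  qed
  moreover have "(\<lambda>k. \<Sum>m\<in>M. u m i * v m j * ((s * \<mu> m) ^ k / fact k))
      sums (\<Sum>m\<in>M. u m i * v m j * exp (s * \<mu> m))"
  proof (intro sums_sum sums_mult)
    show "(\<lambda>k. (s * \<mu> m) ^ k / fact k) sums exp (s * \<mu> m)" for m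
      using exp_converges[of "s * \<mu> m"] by (simp add: scaleR_conv_of_real divide_inverse mult.commute)
  qed
  ultimately show ?thesis
    using A ij by (simp add: mat_exp_def sums_iff sum_divide_distrib)
qed

definition ese_diag :: "nat \<Rightarrow> real" where
  "ese_diag i = 0"

definition ese_offdiag :: "nat \<Rightarrow> real" where
  "ese_offdiag i = (if i = 1 then 1 else sqrt 15 / 2)"

definition ese_jacobi :: "complex mat" where
  "ese_jacobi = jacobi_mat 3 ese_diag ese_offdiag"

text \<open>Row \<open>m\<close> of \<open>ese_eigenvector\<close> is a left eigenvector of \<open>ese_jacobi\<close> for
  \<open>ese_eigenvalue m\<close>, and \<open>ese_weight m\<close> is the inverse of its squared norm; since the rows are
  orthogonal, this makes them a complete system.\<close>

definition ese_eigenvalue :: "nat \<Rightarrow> real" where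
  "ese_eigenvalue m = [5/2, 3/2, -3/2, -5/2] ! m"

definition ese_eigenvector :: "nat \<Rightarrow> nat \<Rightarrow> real" where
  "ese_eigenvector m i =
     [[1, sqrt 15 / 3, sqrt 15 / 3, 1], [1, sqrt 15 / 5, - sqrt 15 / 5, -1],
      [1, - sqrt 15 / 5, - sqrt 15 / 5, 1], [1, - sqrt 15 / 3, sqrt 15 / 3, -1]] ! m ! i"

definition ese_weight :: "nat \<Rightarrow> real" where
  "ese_weight m = [3/16, 5/16, 5/16, 3/16] ! m"

lemma less_4_cases: "(i::nat) < 4 \<longleftrightarrow> i = 0 \<or> i = 1 \<or> i = 2 \<or> i = 3"
  by auto

lemma ese_jacobi_carrier: "ese_jacobi \<in> carrier_mat 4 4"
  by (simp add: ese_jacobi_def jacobi_mat_def)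

lemma ese_eigenvector_eigen:
  assumes "m < 4" "j < 4"
  shows "(\<Sum>l<4. complex_of_real (ese_eigenvector m l) * ese_jacobi $$ (l, j))
    = complex_of_real (ese_eigenvalue m) * complex_of_real (ese_eigenvector m j)"
  using assms unfolding less_4_cases
  by (auto simp: numeral_eq_Suc ese_jacobi_def jacobi_mat_def ese_eigenvector_def ese_eigenvalue_def
      ese_diag_def ese_offdiag_def field_simps complex_eq_iff)

lemma ese_eigenvector_complete:
  assumes "i < 4" "j < 4"
  shows "(\<Sum>m<4. complex_of_real (ese_weight m * ese_eigenvector m i) * complex_of_real (ese_eigenvector m j))
    = (if i = j then 1 else 0)"
  using assms unfolding less_4_cases
  by (auto simp: numeral_eq_Suc ese_eigenvector_def ese_weight_def field_simps complex_eq_iff)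

definition ese_state :: "real \<Rightarrow> complex vec" where
  "ese_state t = mat_exp ((- \<i> * complex_of_real t) \<cdot>\<^sub>m ese_jacobi) *\<^sub>v unit_vec 4 0"

lemma ese_state_index:
  assumes "i < 4"
  shows "ese_state t $ i = (\<Sum>m<4. complex_of_real (ese_weight m * ese_eigenvector m i)
      * complex_of_real (ese_eigenvector m 0) * exp (- \<i> * complex_of_real t * complex_of_real (ese_eigenvalue m)))"
proof -
  have "ese_state t $ i = mat_exp ((- \<i> * complex_of_real t) \<cdot>\<^sub>m ese_jacobi) $$ (i, 0)"
    using assms ese_jacobi_carrier by (simp add: ese_state_def mat_exp_def)
  also have "\<dots> = (\<Sum>m<4. complex_of_real (ese_weight m * ese_eigenvector m i)
      * complex_of_real (ese_eigenvector m 0) * exp (- \<i> * complex_of_real t * complex_of_real (ese_eigenvalue m)))"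
    using assms
    by (intro mat_exp_eigen_expansion[OF ese_jacobi_carrier finite_lessThan ese_eigenvector_eigen
          ese_eigenvector_complete]) simp_all
  finally show ?thesis .
qed

lemma ese_state_components:
  "ese_state t $ 0 = complex_of_real (3/8 * cos (5/2 * t) + 5/8 * cos (3/2 * t))"
  "ese_state t $ 1 = - \<i> * complex_of_real (sqrt 15 / 8 * (sin (5/2 * t) + sin (3/2 * t)))"
  "ese_state t $ 2 = complex_of_real (sqrt 15 / 8 * (cos (5/2 * t) - cos (3/2 * t)))"
  "ese_state t $ 3 = - \<i> * complex_of_real (3/8 * sin (5/2 * t) - 5/8 * sin (3/2 * t))"
  by (simp_all add: ese_state_index numeral_eq_Suc ese_weight_def ese_eigenvector_def ese_eigenvalue_def
      exp_eq_polar complex_eq_iff mult.commute ring_distribs)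

lemma ese_state_carrier: "ese_state t \<in> carrier_vec 4"
  using ese_jacobi_carrier by (simp add: ese_state_def mat_exp_def carrier_vecI)

lemma pst_ese_jacobi_iff:
  "pst 3 ese_jacobi T \<longleftrightarrow> 0 < T \<and> (\<exists>\<phi>. ese_state T = exp (\<i> * complex_of_real \<phi>) \<cdot>\<^sub>v unit_vec 4 3)"
  by (simp add: pst_def ese_state_def)

lemma ese_state_pi: "ese_state pi = (- \<i>) \<cdot>\<^sub>v unit_vec 4 3"
proof -
  have shift: "5 * pi / 2 = pi/2 + 2 * pi" "3 * pi / 2 = pi/2 + pi"
    by simp_all
  have trig: "sin (5 * pi / 2) = 1" "sin (3 * pi / 2) = -1" "cos (5 * pi / 2) = 0" "cos (3 * pi / 2) = 0"
    unfolding shift by (simp_all only: sin_periodic cos_periodic sin_periodic_pi cos_periodic_pi) simp_all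
  show ?thesis
  proof (rule eq_vecI)
    fix i
    assume "i < dim_vec ((- \<i>) \<cdot>\<^sub>v unit_vec 4 3)"
    then consider "i = 0" | "i = 1" | "i = 2" | "i = 3"
      by fastforce
    then show "ese_state pi $ i = ((- \<i>) \<cdot>\<^sub>v unit_vec 4 3) $ i"
      by cases (simp_all only: ese_state_components, simp_all add: trig)
  qed (use ese_state_carrier in simp)
qed

lemma ese_jacobi_pst_pi: "pst 3 ese_jacobi pi"
proof -
  have "exp (\<i> * complex_of_real (- pi/2)) = - \<i>"
    by (simp add: exp_eq_polar complex_eq_iff)
  then show ?thesis
    unfolding pst_ese_jacobi_iff ese_state_pi by (metis pi_gt_zero)
qed

lemma cos_5_halves_3_halves_no_common_zero:
  assumes "0 < T" "T < pi" "cos (5/2 * T) = 0"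
  shows "cos (3/2 * T) \<noteq> 0"
proof
  assume "cos (3/2 * T) = 0"
  with assms(3) obtain i j :: int
    where "odd j" "5/2 * T = of_int i * (pi/2)" "3/2 * T = of_int j * (pi/2)"
    unfolding cos_zero_iff_int by blast
  then have five: "5 * T = of_int i * pi" and three: "3 * T = of_int j * pi" and "odd j"
    by simp_all
  have "0 < of_int j * pi" "of_int j * pi < 3 * pi"
    using three assms(1,2) by linarith+
  then have "0 < j" "j < 3"
    by (simp_all add: zero_less_mult_iff)
  with \<open>odd j\<close> have "j = 1"
    by presburger
  have "of_int (3 * i) * pi = 3 * (5 * T)"
    using five by simp
  also have "\<dots> = 5 * (3 * T)"
    by simp
  also have "\<dots> = of_int 5 * pi"
    using three \<open>j = 1\<close> by simp
  finally have "3 * i = 5"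
    by simp
  then show False
    by presburger
qed

lemma ese_jacobi_no_pst_before_pi:
  assumes "0 < T" "T < pi"
  shows "\<not> pst 3 ese_jacobi T"
proof
  assume "pst 3 ese_jacobi T"
  then obtain \<phi> where "ese_state T $ 3 = exp (\<i> * complex_of_real \<phi>)"
    unfolding pst_ese_jacobi_iff by auto
  then have "cmod (ese_state T $ 3) = 1"
    by (simp add: exp_eq_polar norm_mult)
  then have amp: "\<bar>3/8 * sin (5/2 * T) - 5/8 * sin (3/2 * T)\<bar> = 1"
    by (simp only: ese_state_components norm_mult norm_minus_cancel norm_ii norm_of_real mult_1_left)
  have "\<bar>sin (5/2 * T)\<bar> \<le> 1" "\<bar>sin (3/2 * T)\<bar> \<le> 1"
    by (simp_all add: abs_sin_le_one)
  with amp have "\<bar>sin (5/2 * T)\<bar> = 1 \<and> \<bar>sin (3/2 * T)\<bar> = 1"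
    by arith
  then have "(sin (5/2 * T))\<^sup>2 = 1" "(sin (3/2 * T))\<^sup>2 = 1"
    by (metis power2_abs one_power2)+
  then have "(cos (5/2 * T))\<^sup>2 = 0" "(cos (3/2 * T))\<^sup>2 = 0"
    by (simp_all add: cos_squared_eq)
  then have "cos (5/2 * T) = 0" "cos (3/2 * T) = 0"
    by simp_all
  then show False
    using cos_5_halves_3_halves_no_common_zero assms by blast
qed

lemma ese_jacobi_earliest_pst: "earliest_pst 3 ese_jacobi pi"
  unfolding earliest_pst_def using ese_jacobi_pst_pi ese_jacobi_no_pst_before_pi by blast

lemma cos_5_3_identity:
  fixes x :: real
  shows "3 * cos (5 * x) + 5 * cos (3 * x) = 8 * cos x ^ 3 * (6 * cos x ^ 2 - 5)"
proof -
  have "(5 * x + x) / 2 = 3 * x" "(5 * x - x) / 2 = 2 * x"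
    by simp_all
  then have "cos (5 * x) + cos x = 2 * cos (3 * x) * cos (2 * x)"
    by (metis cos_plus_cos)
  then have "cos (5 * x) = 2 * cos (3 * x) * cos (2 * x) - cos x"
    by linarith
  then show ?thesis
    unfolding cos_treble_cos cos_double_cos by (simp add: algebra_simps power_def)
qed

lemma ese_state_return_zero: "\<exists>t. 0 < t \<and> t < pi \<and> ese_state t $ 0 = 0"
proof -
  define c where "c = sqrt (5/6 :: real)"
  define x where "x = arccos c"
  have c: "0 < c" "c < 1" "c ^ 2 = 5/6"
    by (simp_all add: c_def real_sqrt_lt_1_iff)
  then have "cos x = c"
    by (simp add: x_def)
  have "0 < x"
    using arccos_lt_bounded c by (simp add: x_def)
  moreover have "x < pi/2"
  proof -
    have "x \<le> pi/2"
      using arccos_le_pi2 c by (simp add: x_def)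
    moreover have "x \<noteq> pi/2"
      using \<open>cos x = c\<close> c(1) cos_pi_half by (metis less_irrefl)
    ultimately show ?thesis
      by simp
  qed
  moreover have "ese_state (2 * x) $ 0 = 0"
  proof -
    have "3/8 * cos (5/2 * (2 * x)) + 5/8 * cos (3/2 * (2 * x)) = 0"
      using cos_5_3_identity[of x] \<open>cos x = c\<close> c by simp
    then show ?thesis
      by (simp only: ese_state_components of_real_0)
  qed
  ultimately show ?thesis
    by (intro exI[of _ "2 * x"]) simp
qed

lemma ese_jacobi_eseI:
  assumes "0 < t" "t < pi" "ese_state t $ 0 = 0"
  shows "ese 3 ese_jacobi t"
proof -
  have "conjugate (unit_vec 4 0) = (unit_vec 4 0 :: complex vec)"
    by (auto simp: unit_vec_def)
  then have "ese_state t \<bullet>c unit_vec 4 0 = ese_state t $ 0"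
    using ese_state_carrier by simp
  then show ?thesis
    unfolding ese_def using assms ese_jacobi_earliest_pst by (auto simp: ese_state_def)
qed

theorem mainTheorem2:
  shows "\<exists>(a::nat \<Rightarrow> real) (b::nat \<Rightarrow> real).
           (\<forall>i<3. b i > 0) \<and>
           (\<exists>T. pst 3 (jacobi_mat 3 a b) T) \<and>
           (\<exists>t. ese 3 (jacobi_mat 3 a b) t)"
proof -
  have "\<forall>i<3. ese_offdiag i > 0"
    by (simp add: ese_offdiag_def)
  moreover have "\<exists>t. ese 3 ese_jacobi t"
    using ese_state_return_zero ese_jacobi_eseI by blast
  ultimately show ?thesis
    using ese_jacobi_pst_pi unfolding ese_jacobi_def by blast
qed

end
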